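(* Consider the multi-agent setting described in the context, with parameters $\alpha>0$ and $F\in\mathbb Z_{\ge0}$. Assume: - the set $\mathcal A$ of misbehaving agents is $F$-local; - the digraph $\mathcal D$ is $(2F+1)$-robust. Then the normal agents achieve Finite-Time Resilient Consensus. That is, for trajectories $x_{\mathcal N}:[0,\infty)\to\mathbb R^{|\mathcal N|}$ of the normal agents: (i) $x_i(t)\in[m(x_{\mathcal N}(0)),M(x_{\mathcal N}(0))]$ for all $t\ge0$ and all $i\in\mathcal N$; (ii) there exists $T:\mathbb R^{|\mathcal N|}\to\mathbb R_{\ge0}$ such that $V(x_{\mathcal N}(t))=0$, equivalently $x_{\mathcal N}(t)\in\mathrm{span}(\mathbf 1)$, for all $t\ge T(x_{\mathcal N}(0))$.
   Context: Setting. Let $\mathcal D=(\mathcal V,\mathcal E)$ be a digraph with $\mathcal V=\{1,\dots,n\}$ and $n\ge2$. An edge $(i,j)\in\mathcal E$ means that agent $j$ receives information from agent $i$. The in-neighbor set of $i$ is $\mathcal V_i=\{j:(j,i)\in\mathcal E\}$, and $\mathcal J_i=\mathcal V_i\cup\{i\}$. - A nonempty $S\subset\mathcal V$ is $r$-reachable if some $i\in S$ has $|\mathcal V_i\setminus S|\ge r$. - $\mathcal D$ is $r$-robust if for every pair of nonempty disjoint subsets of $\mathcal V$, at least one of them is $r$-reachable. Dynamics and communication. Each agent has a scalar state with $\dot x_i(t)=u_i(t)$, with initial time $0$. Fix a strictly increasing $g:\mathbb R\to\mathbb R$ (not necessarily continuous). At time $t$, agent $i$ receives from each in-neighbor $j$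 a value $g(x^i_j(t))$. The agents are partitioned into normal agents $\mathcal N$ and misbehaving agents $\mathcal A$. - A normal agent $j$ sends $g(x_j(t))$ to all its out-neighbors, so $x^i_j=x_j$, and updates via the FTRC protocol. - Misbehaving agents may use arbitrary inputs and may send arbitrary, possibly different, values to different out-neighbors. The only restriction is that $t\mapsto g(x^i_k(t))$ is Lebesgue measurable for all $k\in\mathcal A$ and $i\in\mathcal N$. - $\mathcal A$ is $F$-local if $|\mathcal V_i\cap\mathcal A|\le F$ for every $i\in\mathcal V\setminus\mathcal A$. FTRC protocol for a normal agent $i$ at time $t$: 1. Sort the received values $g(x^i_j(t))$, $j\in\mathcal V_i$. 2. If fewer than $F$ values are strictly larger than $g(x_i(t))$, remove all values strictly larger than $g(x_i(t))$; otherwise remove exactly the $F$ largest values. 3. Likewise, if fewer than $F$ values are strictly smaller than $g(x_i(t))$, remove all values strictly smaller; otherwise remove exactly the $F$ smallest values. 4. With $\mathcal R_i(t)$ the set of agents whose values were removed, set $u_i(t)=\alpha\,\mathrm{sign}\big(\sum_{j\in\mathcal J_i\setminus\mathcal R_i(t)}(g(x^i_j(t))-g(x_i(t)))\big)$, where $x^i_i=x_i$ and $\mathrm{sign}(0)=0$. Trajectories and auxiliary functions. Write $x_{\mathcal N}=(x_{\mathcal N_1},\dots,x_{\mathcal N_{|\mathcal N|}})^T$ for a fixed ordering of $\mathcal N$. A trajectory of the normal agents on an interval $I\ni0$ is an absolutely continuous $x_{\mathcal N}:I\to\mathbb R^{|\mathcal N|}$ with $\dot x_{\mathcal N_k}(t)=u_{\mathcal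 N_k}(t)$ for all $k$ and almost every $t\in I$. For $x\in\mathbb R^{|\mathcal N|}$, set $M(x)=\max_k x_k$, $m(x)=\min_k x_k$ and $V(x)=M(x)-m(x)$. Here $\mathbf 1$ is the all-ones vector. *)

theory Defs
  imports "HOL-Analysis.Analysis"
begin

text \<open>Edge (i,j) in E means: agent j receives information from agent i.\<close>

definition in_nbrs :: "(nat \<times> nat) set \<Rightarrow> nat \<Rightarrow> nat set" where
  "in_nbrs E i = {j. (j, i) \<in> E}"

definition r_reachable :: "(nat \<times> nat) set \<Rightarrow> nat set \<Rightarrow> nat \<Rightarrow> bool" where
  "r_reachable E S r \<longleftrightarrow> (\<exists>i\<in>S. card (in_nbrs E i - S) \<ge> r)"

definition r_robust :: "nat set \<Rightarrow> (nat \<times> nat) set \<Rightarrow> nat \<Rightarrow> bool" where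
  "r_robust V E r \<longleftrightarrow>
     (\<forall>S1 S2. S1 \<subseteq> V \<and> S2 \<subseteq> V \<and> S1 \<noteq> {} \<and> S2 \<noteq> {} \<and> S1 \<inter> S2 = {}
        \<longrightarrow> r_reachable E S1 r \<or> r_reachable E S2 r)"

definition F_local :: "nat set \<Rightarrow> (nat \<times> nat) set \<Rightarrow> nat set \<Rightarrow> nat \<Rightarrow> bool" where
  "F_local V E A F \<longleftrightarrow> (\<forall>i\<in>V - A. card (in_nbrs E i \<inter> A) \<le> F)"

text \<open>w j is the value g(x^i_j(t)) received by agent i from in-neighbour j,
  and w i = g(x_i(t)) is agent i's own value.  The in-neighbours are sorted by
  received value; removal of the F largest (smallest) values removes the last
  (first) F entries of the sorted list (ties broken arbitrarily, which does not
  affect the resulting sum).\<close>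

definition ftrc_removed :: "(nat \<times> nat) set \<Rightarrow> nat \<Rightarrow> (nat \<Rightarrow> real) \<Rightarrow> nat \<Rightarrow> nat set" where
  "ftrc_removed E F w i =
     (let Vi = in_nbrs E i; c = w i;
          L = sort_key w (sorted_list_of_set Vi);
          big = {j\<in>Vi. w j > c}; small = {j\<in>Vi. w j < c};
          Rbig = (if card big < F then big else set (drop (length L - F) L));
          Rsmall = (if card small < F then small else set (take F L))
      in Rbig \<union> Rsmall)"

definition ftrc_input :: "(nat \<times> nat) set \<Rightarrow> nat \<Rightarrow> real \<Rightarrow> (nat \<Rightarrow> real) \<Rightarrow> nat \<Rightarrow> real" where
  "ftrc_input E F \<alpha> w i =
     \<alpha> * sgn (\<Sum>j\<in>(insert i (in_nbrs E i)) - ftrc_removed E F w i. w j - w i)"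

definition abs_cont_on :: "real set \<Rightarrow> (real \<Rightarrow> real) \<Rightarrow> bool" where
  "abs_cont_on S f \<longleftrightarrow>
     (\<forall>\<epsilon>>0. \<exists>\<delta>>0. \<forall>(K::nat) a b.
        (\<forall>k<K. a k \<le> b k \<and> {a k..b k} \<subseteq> S) \<and>
        (\<forall>k<K. \<forall>l<K. k \<noteq> l \<longrightarrow> {a k<..<b k} \<inter> {a l<..<b l} = {}) \<and>
        (\<Sum>k<K. b k - a k) < \<delta>
        \<longrightarrow> (\<Sum>k<K. \<bar>f (b k) - f (a k)\<bar>) < \<epsilon>)"

text \<open>On the unbounded interval [0,\<infinity>), absolute continuity is understood
  locally: on every compact subinterval.\<close>

definition loc_abs_cont_nonneg :: "(real \<Rightarrow> real) \<Rightarrow> bool" where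
  "loc_abs_cont_nonneg f \<longleftrightarrow> (\<forall>b\<ge>0. abs_cont_on {0..b} f)"

definition received :: "nat set \<Rightarrow> (real \<Rightarrow> real) \<Rightarrow> (nat \<Rightarrow> real \<Rightarrow> real)
    \<Rightarrow> (nat \<Rightarrow> nat \<Rightarrow> real \<Rightarrow> real) \<Rightarrow> real \<Rightarrow> nat \<Rightarrow> nat \<Rightarrow> real" where
  "received N g x xA t i j = (if j \<in> N then g (x j t) else g (xA j i t))"

definition ftrc_trajectory :: "nat set \<Rightarrow> (nat \<times> nat) set \<Rightarrow> nat \<Rightarrow> real \<Rightarrow> nat set
    \<Rightarrow> (real \<Rightarrow> real) \<Rightarrow> (nat \<Rightarrow> nat \<Rightarrow> real \<Rightarrow> real) \<Rightarrow> (nat \<Rightarrow> real \<Rightarrow> real) \<Rightarrow> bool" where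
  "ftrc_trajectory V E F \<alpha> N g xA x \<longleftrightarrow>
     (\<forall>k\<in>N. loc_abs_cont_nonneg (x k)) \<and>
     (\<exists>Z. Z \<in> null_sets lebesgue \<and>
        (\<forall>t\<in>{0..} - Z. \<forall>k\<in>N.
           (x k has_real_derivative ftrc_input E F \<alpha> (received N g x xA t k) k) (at t)))"

end

theory Submission
  imports Defs
begin

(* Write M(t) and m(t) for the largest and smallest normal state.  A normal agent attaining M(t)
   receives larger values only from its at most F misbehaving in-neighbours, all of which FTRC
   discards, so its input is at most 0; hence M never increases and, symmetrically, m never
   decreases, which gives (i).  While M(t) > m(t), (2F+1)-robustness applied to the two sets of
   agents attaining M(t) and m(t) yields an agent in one of them with at least F+1 normal
   in-neighbours strictly on the inner side; at least one of them survives the trimming, so that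
   agent moves inwards at speed alpha.  Except at countably many times, all agents attaining the
   extremum then move in the same way, so V = M - m decreases at rate at least alpha and vanishes
   by time V(0)/alpha, which gives (ii).  Since M and m are merely absolutely continuous, the
   decrease is obtained from one-sided difference quotients by a gauge-integral argument. *)

section \<open>One-sided slope bounds\<close>

(* A pointwise replacement for "f'(t) \<le> c" that also makes sense for the maximum of finitely
   many differentiable functions. *)
definition slope_le_at :: "(real \<Rightarrow> real) \<Rightarrow> real \<Rightarrow> real \<Rightarrow> bool" where
  "slope_le_at f c t \<longleftrightarrow>
     eventually (\<lambda>s. f s \<le> f t + c * (s - t)) (at_right t) \<and>
     eventually (\<lambda>s. f t + c * (s - t) \<le> f s) (at_left t)"

lemma slope_le_at_add:
  assumes "slope_le_at f c t" and "slope_le_at h d t"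
  shows "slope_le_at (\<lambda>s. f s + h s) (c + d) t"
  using assms unfolding slope_le_at_def
  by (auto elim: eventually_elim2 simp: algebra_simps)

lemma has_real_derivative_slope_le_at:
  assumes "(f has_real_derivative u) (at t)" and "u < c"
  shows "slope_le_at f c t"
proof -
  have "((\<lambda>s. (f s - f t) / (s - t)) \<longlongrightarrow> u) (at t)"
    using assms(1) by (simp add: has_field_derivative_iff)
  then have "eventually (\<lambda>s. (f s - f t) / (s - t) < c) (at t)"
    using assms(2) by (rule order_tendstoD)
  then have right: "eventually (\<lambda>s. (f s - f t) / (s - t) < c) (at_right t)"
    and left: "eventually (\<lambda>s. (f s - f t) / (s - t) < c) (at_left t)"
    by (simp_all add: eventually_at_split)
  show ?thesis
    unfolding slope_le_at_def
  proof
    show "eventually (\<lambda>s. f s \<le> f t + c * (s - t)) (at_right t)"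
      using right eventually_at_right_less[of t]
      by eventually_elim (simp add: pos_divide_less_eq algebra_simps)
    have "eventually (\<lambda>s. s < t) (at_left t)"
      by (simp add: eventually_at_filter)
    with left show "eventually (\<lambda>s. f t + c * (s - t) \<le> f s) (at_left t)"
      by eventually_elim (auto simp: neg_divide_less_eq algebra_simps)
  qed
qed

lemma slope_le_atD:
  assumes "slope_le_at f c t"
  obtains r where "r > 0"
    "\<And>u v. t - r < u \<Longrightarrow> u \<le> t \<Longrightarrow> t \<le> v \<Longrightarrow> v < t + r \<Longrightarrow> f v - f u \<le> c * (v - u)"
proof -
  obtain b1 where b1: "b1 > t" "\<And>s. t < s \<Longrightarrow> s < b1 \<Longrightarrow> f s \<le> f t + c * (s - t)"
    using assms unfolding slope_le_at_def eventually_at_right_field by blast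
  obtain b2 where b2: "b2 < t" "\<And>s. b2 < s \<Longrightarrow> s < t \<Longrightarrow> f t + c * (s - t) \<le> f s"
    using assms unfolding slope_le_at_def eventually_at_left_field by blast
  show thesis
  proof
    show "min (b1 - t) (t - b2) > 0"
      using b1 b2 by simp
    fix u v assume uv: "t - min (b1 - t) (t - b2) < u" "u \<le> t" "t \<le> v" "v < t + min (b1 - t) (t - b2)"
    have "f v \<le> f t + c * (v - t)"
      using b1 uv by (cases "v = t") auto
    moreover have "f t + c * (u - t) \<le> f u"
      using b2 uv by (cases "u = t") auto
    ultimately show "f v - f u \<le> c * (v - u)"
      by (simp add: algebra_simps)
  qed
qed

lemma slope_le_at_Max:
  fixes y :: "'i \<Rightarrow> real \<Rightarrow> real"
  assumes fin: "finite N" and ne: "N \<noteq> {}"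
    and deriv: "\<And>j. j \<in> N \<Longrightarrow> (y j has_real_derivative u j) (at t)"
    and top: "\<And>j. j \<in> N \<Longrightarrow> y j t = Max ((\<lambda>j. y j t) ` N) \<Longrightarrow> u j < c"
  shows "slope_le_at (\<lambda>s. Max ((\<lambda>j. y j s) ` N)) c t"
proof -
  let ?M = "\<lambda>s. Max ((\<lambda>j. y j s) ` N)"
  have "\<forall>j\<in>N. eventually (\<lambda>s. y j s \<le> ?M t + c * (s - t)) (at_right t)"
  proof
    fix j assume j: "j \<in> N"
    show "eventually (\<lambda>s. y j s \<le> ?M t + c * (s - t)) (at_right t)"
    proof (cases "y j t = ?M t")
      case True
      then show ?thesis
        using has_real_derivative_slope_le_at[OF deriv[OF j] top[OF j True]]
        unfolding slope_le_at_def by simp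
    next
      case False
      then have "y j t < ?M t"
        using fin j by (simp add: order_less_le)
      moreover have "((\<lambda>s. ?M t + c * (s - t) - y j s) \<longlongrightarrow> ?M t + c * (t - t) - y j t) (at t)"
        using DERIV_isCont[OF deriv[OF j]] unfolding isCont_def by (intro tendsto_intros) auto
      ultimately have "eventually (\<lambda>s. 0 < ?M t + c * (s - t) - y j s) (at t)"
        by (intro order_tendstoD(1)) auto
      then show ?thesis
        by (auto simp: eventually_at_split elim: eventually_mono)
    qed
  qed
  then have "eventually (\<lambda>s. \<forall>j\<in>N. y j s \<le> ?M t + c * (s - t)) (at_right t)"
    using fin by (rule eventually_ball_finite[rotated])
  then have right: "eventually (\<lambda>s. ?M s \<le> ?M t + c * (s - t)) (at_right t)"
    by eventually_elim (use fin ne in auto)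
  have "?M t \<in> (\<lambda>j. y j t) ` N"
    using fin ne by simp
  then obtain i where i: "i \<in> N" "y i t = ?M t"
    by auto
  have "eventually (\<lambda>s. y i t + c * (s - t) \<le> y i s) (at_left t)"
    using has_real_derivative_slope_le_at[OF deriv[OF i(1)] top[OF i]]
    unfolding slope_le_at_def by simp
  then have left: "eventually (\<lambda>s. ?M t + c * (s - t) \<le> ?M s) (at_left t)"
    by eventually_elim (use fin i in \<open>auto intro: order_trans\<close>)
  from right left show ?thesis
    unfolding slope_le_at_def ..
qed

section \<open>Absolutely continuous functions with bounded slopes\<close>

definition interval_family_in :: "real set \<Rightarrow> nat \<Rightarrow> (nat \<Rightarrow> real) \<Rightarrow> (nat \<Rightarrow> real) \<Rightarrow> bool" where
  "interval_family_in S K a b \<longleftrightarrow>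
     (\<forall>k<K. a k \<le> b k \<and> {a k..b k} \<subseteq> S) \<and>
     (\<forall>k<K. \<forall>l<K. k \<noteq> l \<longrightarrow> {a k<..<b k} \<inter> {a l<..<b l} = {})"

lemma abs_cont_on_iff:
  "abs_cont_on S f \<longleftrightarrow>
     (\<forall>e>0. \<exists>d>0. \<forall>K a b. interval_family_in S K a b \<and> (\<Sum>k<K. b k - a k) < d \<longrightarrow>
        (\<Sum>k<K. \<bar>f (b k) - f (a k)\<bar>) < e)"
  by (simp add: abs_cont_on_def interval_family_in_def conj_assoc)

lemma abs_cont_onE:
  assumes "abs_cont_on S f" and "e > 0"
  obtains d where "d > 0" "\<And>K a b. interval_family_in S K a b \<Longrightarrow> (\<Sum>k<K. b k - a k) < d \<Longrightarrow>
    (\<Sum>k<K. \<bar>f (b k) - f (a k)\<bar>) < e"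
  using assms unfolding abs_cont_on_iff by meson

lemma abs_cont_on_uniform:
  fixes f :: "'i \<Rightarrow> real \<Rightarrow> real"
  assumes "finite N" and "\<And>j. j \<in> N \<Longrightarrow> abs_cont_on S (f j)" and "e > 0"
  obtains \<delta> where "\<delta> > 0" "\<And>j K a b. j \<in> N \<Longrightarrow> interval_family_in S K a b \<Longrightarrow>
    (\<Sum>k<K. b k - a k) < \<delta> \<Longrightarrow> (\<Sum>k<K. \<bar>f j (b k) - f j (a k)\<bar>) < e"
proof -
  have "\<forall>j\<in>N. \<exists>d>0. \<forall>K a b. interval_family_in S K a b \<and> (\<Sum>k<K. b k - a k) < d \<longrightarrow>
      (\<Sum>k<K. \<bar>f j (b k) - f j (a k)\<bar>) < e"
    using assms(2,3) unfolding abs_cont_on_iff by blast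
  then obtain d where d: "\<forall>j\<in>N. d j > 0 \<and> (\<forall>K a b. interval_family_in S K a b \<and> (\<Sum>k<K. b k - a k) < d j \<longrightarrow>
      (\<Sum>k<K. \<bar>f j (b k) - f j (a k)\<bar>) < e)"
    by (elim bchoice[elim_format] exE) assumption
  show thesis
  proof (rule that)
    show "Min (insert 1 (d ` N)) > 0"
      using d assms(1) by auto
    fix j K a b assume "j \<in> N" "interval_family_in S K a b" "(\<Sum>k<K. b k - a k) < Min (insert 1 (d ` N))"
    moreover have "Min (insert 1 (d ` N)) \<le> d j"
      using \<open>j \<in> N\<close> assms(1) by simp
    ultimately have "interval_family_in S K a b \<and> (\<Sum>k<K. b k - a k) < d j"
      by linarith
    then show "(\<Sum>k<K. \<bar>f j (b k) - f j (a k)\<bar>) < e"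
      using d \<open>j \<in> N\<close> by blast
  qed
qed

lemma abs_cont_on_dominated:
  fixes f :: "'i \<Rightarrow> real \<Rightarrow> real" and h :: "real \<Rightarrow> real"
  assumes fin: "finite N" and ac: "\<And>j. j \<in> N \<Longrightarrow> abs_cont_on S (f j)" and "C \<ge> 0"
    and dom: "\<And>a b. a \<in> S \<Longrightarrow> b \<in> S \<Longrightarrow> \<bar>h b - h a\<bar> \<le> C * (\<Sum>j\<in>N. \<bar>f j b - f j a\<bar>)"
  shows "abs_cont_on S h"
  unfolding abs_cont_on_iff
proof (intro allI impI)
  fix e :: real assume "e > 0"
  define e' where "e' = e / (C * card N + 1)"
  have "C * card N + 1 > 0"
    using \<open>C \<ge> 0\<close> by (simp add: add_nonneg_pos)
  then have "e' > 0" and e'_small: "C * (card N * e') < e"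
    using \<open>e > 0\<close> by (auto simp: e'_def field_simps)
  obtain \<delta> where "\<delta> > 0" and \<delta>: "\<And>j K a b. j \<in> N \<Longrightarrow> interval_family_in S K a b \<Longrightarrow>
      (\<Sum>k<K. b k - a k) < \<delta> \<Longrightarrow> (\<Sum>k<K. \<bar>f j (b k) - f j (a k)\<bar>) < e'"
    by (rule abs_cont_on_uniform[where f = f, OF fin ac \<open>e' > 0\<close>]) (assumption | rule that)+
  have "(\<Sum>k<K. \<bar>h (b k) - h (a k)\<bar>) < e"
    if family: "interval_family_in S K a b" and length: "(\<Sum>k<K. b k - a k) < \<delta>" for K a b
  proof -
    have "(\<Sum>k<K. \<bar>h (b k) - h (a k)\<bar>) \<le> (\<Sum>k<K. C * (\<Sum>j\<in>N. \<bar>f j (b k) - f j (a k)\<bar>))"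
    proof (intro sum_mono dom)
      fix k assume "k \<in> {..<K}"
      then have "a k \<le> b k" "{a k..b k} \<subseteq> S"
        using family by (auto simp: interval_family_in_def)
      then show "a k \<in> S" "b k \<in> S"
        by auto
    qed
    also have "\<dots> = C * (\<Sum>j\<in>N. \<Sum>k<K. \<bar>f j (b k) - f j (a k)\<bar>)"
      by (simp add: sum_distrib_left sum.swap[of _ _ N])
    also have "\<dots> \<le> C * (card N * e')"
      using sum_bounded_above[of N _ e'] \<delta>[OF _ family length] \<open>C \<ge> 0\<close>
      by (intro mult_left_mono) (simp_all add: less_imp_le)
    also have "\<dots> < e"
      by (rule e'_small)
    finally show ?thesis .
  qed
  with \<open>\<delta> > 0\<close> show "\<exists>\<delta>>0. \<forall>K a b. interval_family_in S K a b \<and> (\<Sum>k<K. b k - a k) < \<delta> \<longrightarrow>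
      (\<Sum>k<K. \<bar>h (b k) - h (a k)\<bar>) < e"
    by blast
qed

lemma abs_Max_diff_le_sum:
  fixes f g :: "'i \<Rightarrow> real"
  assumes "finite N" and "N \<noteq> {}"
  shows "\<bar>Max (f ` N) - Max (g ` N)\<bar> \<le> (\<Sum>j\<in>N. \<bar>f j - g j\<bar>)"
proof -
  have "Max (f ` N) \<in> f ` N" "Max (g ` N) \<in> g ` N"
    using assms by simp_all
  then obtain i j where "i \<in> N" "Max (f ` N) = f i" and "j \<in> N" "Max (g ` N) = g j"
    by auto
  moreover have "g i \<le> Max (g ` N)" "f j \<le> Max (f ` N)"
    using assms \<open>i \<in> N\<close> \<open>j \<in> N\<close> by auto
  moreover have "\<bar>f i - g i\<bar> \<le> (\<Sum>j\<in>N. \<bar>f j - g j\<bar>)" "\<bar>f j - g j\<bar> \<le> (\<Sum>j\<in>N. \<bar>f j - g j\<bar>)"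
    using assms \<open>i \<in> N\<close> \<open>j \<in> N\<close> by (auto intro!: member_le_sum)
  ultimately show ?thesis
    unfolding abs_le_iff by linarith
qed

lemma tagged_division_of_real_intervalE:
  assumes "p tagged_division_of {a..b::real}" and "(x, k) \<in> p"
  obtains u v where "k = {u..v}" "u \<le> x" "x \<le> v" "a \<le> u" "v \<le> b"
    "Inf k = u" "Sup k = v" "interior k = {u<..<v}"
proof -
  obtain u v where k: "k = {u..v}"
    using tagged_division_ofD(4)[OF assms] by (auto simp: cbox_interval)
  moreover have "x \<in> k" "k \<subseteq> {a..b}"
    using tagged_division_ofD(2,3)[OF assms] by auto
  ultimately show thesis
    using that by (auto simp: interior_atLeastAtMost_real)
qed

lemma tagged_division_subset_interval_family:
  assumes p: "p tagged_division_of {a..b}" and q: "q \<subseteq> p" and "{a..b} \<subseteq> S"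
  obtains K a' b' where "interval_family_in S K a' b'"
    "\<And>g :: real \<Rightarrow> real \<Rightarrow> real. (\<Sum>k<K. g (a' k) (b' k)) = (\<Sum>(x, k)\<in>q. g (Inf k) (Sup k))"
proof -
  have "finite q"
    using q tagged_division_ofD(1)[OF p] finite_subset by blast
  then obtain h where h: "bij_betw h {..<card q} q"
    using ex_bij_betw_nat_finite lessThan_atLeast0 by metis
  define a' where "a' i = Inf (snd (h i))" for i
  define b' where "b' i = Sup (snd (h i))" for i
  have piece: "a' i \<le> b' i \<and> {a' i..b' i} \<subseteq> S \<and> interior (snd (h i)) = {a' i<..<b' i}"
    if "i < card q" for i
  proof -
    have "h i \<in> p"
      using h that q unfolding bij_betw_def by auto
    then obtain x k where xk: "h i = (x, k)" "(x, k) \<in> p"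
      by (cases "h i") auto
    from tagged_division_of_real_intervalE[OF p xk(2)]
    obtain u v where "k = {u..v}" "u \<le> x" "x \<le> v" "a \<le> u" "v \<le> b"
      "Inf k = u" "Sup k = v" "interior k = {u<..<v}" .
    then show ?thesis
      using xk assms(3) unfolding a'_def b'_def by auto
  qed
  show thesis
  proof (rule that)
    show "interval_family_in S (card q) a' b'"
      unfolding interval_family_in_def
    proof (intro conjI allI impI)
      fix i j assume ij: "i < card q" "j < card q" "i \<noteq> j"
      then have "h i \<noteq> h j" "h i \<in> p" "h j \<in> p"
        using h q unfolding bij_betw_def inj_on_def by auto
      then have "interior (snd (h i)) \<inter> interior (snd (h j)) = {}"
        using tagged_division_ofD(5)[OF p, of "fst (h i)" "snd (h i)" "fst (h j)" "snd (h j)"] by auto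
      then show "{a' i<..<b' i} \<inter> {a' j<..<b' j} = {}"
        using piece ij(1,2) by metis
    qed (use piece in blast)+
    show "(\<Sum>k<card q. g (a' k) (b' k)) = (\<Sum>(x, k)\<in>q. g (Inf k) (Sup k))" for g
      using sum.reindex_bij_betw[OF h, of "\<lambda>(x, k). g (Inf k) (Sup k)"]
      by (simp add: a'_def b'_def case_prod_beta)
  qed
qed

lemma abs_cont_on_tagged_sum_less:
  fixes f :: "real \<Rightarrow> real"
  assumes "abs_cont_on S f" and "{a..b} \<subseteq> S" and "e > 0"
  obtains d where "d > 0"
    "\<And>p q. p tagged_division_of {a..b} \<Longrightarrow> q \<subseteq> p \<Longrightarrow> (\<Sum>(x, k)\<in>q. Sup k - Inf k) < d \<Longrightarrow>
       (\<Sum>(x, k)\<in>q. \<bar>f (Sup k) - f (Inf k)\<bar>) < e"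
proof -
  obtain d where "d > 0" and small: "\<And>K a' b'. interval_family_in S K a' b' \<Longrightarrow>
      (\<Sum>k<K. b' k - a' k) < d \<Longrightarrow> (\<Sum>k<K. \<bar>f (b' k) - f (a' k)\<bar>) < e"
    using abs_cont_onE[OF assms(1,3)] by blast
  have "(\<Sum>(x, k)\<in>q. \<bar>f (Sup k) - f (Inf k)\<bar>) < e"
    if p: "p tagged_division_of {a..b}" and q: "q \<subseteq> p" and length: "(\<Sum>(x, k)\<in>q. Sup k - Inf k) < d"
    for p q
  proof -
    obtain K a' b' where family: "interval_family_in S K a' b'"
      and sums: "\<And>g :: real \<Rightarrow> real \<Rightarrow> real. (\<Sum>k<K. g (a' k) (b' k)) = (\<Sum>(x, k)\<in>q. g (Inf k) (Sup k))"
      by (rule tagged_division_subset_interval_family[OF p q assms(2)]) (rule that)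
    have "(\<Sum>k<K. b' k - a' k) < d"
      using sums[of "\<lambda>u v. v - u"] length by simp
    then have "(\<Sum>k<K. \<bar>f (b' k) - f (a' k)\<bar>) < e"
      by (rule small[OF family])
    then show ?thesis
      using sums[of "\<lambda>u v. \<bar>f v - f u\<bar>"] by simp
  qed
  with \<open>d > 0\<close> that show thesis
    by blast
qed

lemma negligible_fine_tagged_length_less:
  assumes "negligible Z" and "d > 0"
  obtains \<gamma> where "gauge \<gamma>"
    "\<And>p. p tagged_division_of {a..b::real} \<Longrightarrow> \<gamma> fine p \<Longrightarrow>
       (\<Sum>(x, k)\<in>{xk\<in>p. fst xk \<in> Z}. Sup k - Inf k) < d"
proof -
  have "(indicator Z has_integral (0::real)) {a..b}"
    using assms(1) unfolding negligible_def by (metis cbox_interval)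
  then obtain \<gamma> where "gauge \<gamma>" and \<gamma>: "\<And>p. p tagged_division_of {a..b} \<Longrightarrow> \<gamma> fine p \<Longrightarrow>
      norm ((\<Sum>(x, k)\<in>p. Henstock_Kurzweil_Integration.content k *\<^sub>R (indicator Z x :: real)) - 0) < d"
    using assms(2) unfolding has_integral_real by meson
  have sum_eq: "(\<Sum>(x, k)\<in>p. Henstock_Kurzweil_Integration.content k *\<^sub>R (indicator Z x :: real)) =
      (\<Sum>(x, k)\<in>{xk\<in>p. fst xk \<in> Z}. Sup k - Inf k)"
    if p: "p tagged_division_of {a..b}" for p
  proof -
    have "(\<Sum>(x, k)\<in>p. Henstock_Kurzweil_Integration.content k *\<^sub>R (indicator Z x :: real)) =
        (\<Sum>(x, k)\<in>{xk\<in>p. fst xk \<in> Z}. Henstock_Kurzweil_Integration.content k)"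
      using tagged_division_of_finite[OF p]
      by (simp add: sum.inter_filter[symmetric] case_prod_beta indicator_def if_distrib Int_def cong: if_cong)
    also have "\<dots> = (\<Sum>(x, k)\<in>{xk\<in>p. fst xk \<in> Z}. Sup k - Inf k)"
    proof (rule sum.cong)
      fix xk assume "xk \<in> {xk\<in>p. fst xk \<in> Z}"
      then obtain x k where xk: "xk = (x, k)" "(x, k) \<in> p"
        by (cases xk) auto
      then obtain u v where "k = {u..v}" "u \<le> v"
        using tagged_division_of_real_intervalE[OF p] by (metis order.trans)
      then show "(\<lambda>(x, k). Henstock_Kurzweil_Integration.content k) xk = (\<lambda>(x, k). Sup k - Inf k) xk"
        using xk by (simp add: content_real)
    qed simp
    finally show ?thesis .
  qed
  show thesis
  proof (rule that[OF \<open>gauge \<gamma>\<close>])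
    fix p assume p: "p tagged_division_of {a..b}" and "\<gamma> fine p"
    then show "(\<Sum>(x, k)\<in>{xk\<in>p. fst xk \<in> Z}. Sup k - Inf k) < d"
      using \<gamma>[OF p] unfolding sum_eq[OF p] by simp
  qed
qed

lemma slope_le_at_fine_tagged_sum_le:
  fixes f :: "real \<Rightarrow> real"
  assumes slope: "\<And>t. t \<in> {a..b} \<Longrightarrow> t \<notin> Z \<Longrightarrow> slope_le_at f c t"
  obtains \<gamma> where "gauge \<gamma>"
    "\<And>p. p tagged_division_of {a..b} \<Longrightarrow> \<gamma> fine p \<Longrightarrow>
       (\<Sum>(x, k)\<in>{xk\<in>p. fst xk \<notin> Z}. f (Sup k) - f (Inf k)) \<le> c * (\<Sum>(x, k)\<in>{xk\<in>p. fst xk \<notin> Z}. Sup k - Inf k)"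
proof -
  have "\<forall>t. \<exists>r>0. t \<in> {a..b} - Z \<longrightarrow>
      (\<forall>u v. t - r < u \<longrightarrow> u \<le> t \<longrightarrow> t \<le> v \<longrightarrow> v < t + r \<longrightarrow> f v - f u \<le> c * (v - u))"
    by (metis DiffE slope slope_le_atD zero_less_one)
  then obtain r where r: "\<And>t. r t > 0" and r_slope: "\<And>t u v. t \<in> {a..b} - Z \<Longrightarrow>
      t - r t < u \<Longrightarrow> u \<le> t \<Longrightarrow> t \<le> v \<Longrightarrow> v < t + r t \<Longrightarrow> f v - f u \<le> c * (v - u)"
    by metis
  show thesis
  proof (rule that)
    show "gauge (\<lambda>t. ball t (r t))"
      using r by (intro gauge_ball_dependent) auto
    fix p assume p: "p tagged_division_of {a..b}" and fine: "(\<lambda>t. ball t (r t)) fine p"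
    show "(\<Sum>(x, k)\<in>{xk\<in>p. fst xk \<notin> Z}. f (Sup k) - f (Inf k)) \<le>
        c * (\<Sum>(x, k)\<in>{xk\<in>p. fst xk \<notin> Z}. Sup k - Inf k)"
      unfolding sum_distrib_left
    proof (rule sum_mono)
      fix xk assume "xk \<in> {xk\<in>p. fst xk \<notin> Z}"
      then obtain x k where xk: "xk = (x, k)" "(x, k) \<in> p" "x \<notin> Z"
        by (cases xk) auto
      then obtain u v where uv: "k = {u..v}" "u \<le> x" "x \<le> v" "a \<le> u" "v \<le> b" "Inf k = u" "Sup k = v"
        using tagged_division_of_real_intervalE[OF p] by metis
      have "k \<subseteq> ball x (r x)"
        using fine xk(2) unfolding fine_def by auto
      then have "u \<in> ball x (r x)" "v \<in> ball x (r x)"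
        using uv by (auto simp del: mem_ball)
      then have "f v - f u \<le> c * (v - u)"
        using r_slope[of x u v] uv xk(3) by (auto simp: dist_real_def)
      then show "(\<lambda>(x, k). f (Sup k) - f (Inf k)) xk \<le> c * (\<lambda>(x, k). Sup k - Inf k) xk"
        using uv xk(1) by simp
    qed
  qed
qed

(* A fine tagged division is chosen so that the intervals tagged in Z have small total length,
   hence (by absolute continuity) small total increment, while on every other interval the local
   slope bound at its tag applies. *)
lemma abs_cont_increment_le_approx:
  fixes f :: "real \<Rightarrow> real"
  assumes "a \<le> b" and ac: "abs_cont_on S f" "{a..b} \<subseteq> S" and "negligible Z" and "e > 0"
    and slope: "\<And>t. t \<in> {a..b} \<Longrightarrow> t \<notin> Z \<Longrightarrow> slope_le_at f c t"
  shows "f b - f a \<le> c * (b - a) + 2 * e"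
proof -
  obtain d where "d > 0" and ac_small: "\<And>p q. p tagged_division_of {a..b} \<Longrightarrow> q \<subseteq> p \<Longrightarrow>
      (\<Sum>(x, k)\<in>q. Sup k - Inf k) < d \<Longrightarrow> (\<Sum>(x, k)\<in>q. \<bar>f (Sup k) - f (Inf k)\<bar>) < e"
    using abs_cont_on_tagged_sum_less[OF ac \<open>e > 0\<close>] by blast
  define d' where "d' = min d (e / (\<bar>c\<bar> + 1))"
  have "d' > 0" "d' \<le> d"
    using \<open>d > 0\<close> \<open>e > 0\<close> by (simp_all add: d'_def)
  have "\<bar>c\<bar> * d' \<le> \<bar>c\<bar> * (e / (\<bar>c\<bar> + 1))"
    by (rule mult_left_mono) (auto simp: d'_def)
  also have "\<dots> \<le> e"
    using \<open>e > 0\<close> by (simp add: field_simps)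
  finally have "\<bar>c\<bar> * d' \<le> e" .
  obtain \<gamma>1 where "gauge \<gamma>1" and \<gamma>1: "\<And>p. p tagged_division_of {a..b} \<Longrightarrow> \<gamma>1 fine p \<Longrightarrow>
      (\<Sum>(x, k)\<in>{xk\<in>p. fst xk \<in> Z}. Sup k - Inf k) < d'"
    by (rule negligible_fine_tagged_length_less[of Z d' a b, OF \<open>negligible Z\<close> \<open>d' > 0\<close>]) (rule that)
  obtain \<gamma>2 where "gauge \<gamma>2" and \<gamma>2: "\<And>p. p tagged_division_of {a..b} \<Longrightarrow> \<gamma>2 fine p \<Longrightarrow>
      (\<Sum>(x, k)\<in>{xk\<in>p. fst xk \<notin> Z}. f (Sup k) - f (Inf k)) \<le> c * (\<Sum>(x, k)\<in>{xk\<in>p. fst xk \<notin> Z}. Sup k - Inf k)"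
    by (rule slope_le_at_fine_tagged_sum_le[where a = a and b = b and Z = Z]) (assumption | rule that slope)+
  obtain p where p: "p tagged_division_of {a..b}" and fine: "(\<lambda>t. \<gamma>1 t \<inter> \<gamma>2 t) fine p"
    using fine_division_exists[OF gauge_Int[OF \<open>gauge \<gamma>1\<close> \<open>gauge \<gamma>2\<close>], of a b] by (metis cbox_interval)
  define bad where "bad = {xk\<in>p. fst xk \<in> Z}"
  let ?len = "\<lambda>(x::real, k::real set). Sup k - Inf k"
  let ?incr = "\<lambda>(x::real, k::real set). f (Sup k) - f (Inf k)"
  have "finite p" and "bad \<subseteq> p" and good: "p - bad = {xk\<in>p. fst xk \<notin> Z}"
    using p by (auto simp: bad_def)
  have bad_len: "sum ?len bad < d'" "0 \<le> sum ?len bad"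
    using \<gamma>1[OF p] fine p unfolding bad_def fine_Int
    by (auto intro!: sum_nonneg elim!: tagged_division_of_real_intervalE[OF p])
  have "sum ?incr bad \<le> (\<Sum>(x, k)\<in>bad. \<bar>f (Sup k) - f (Inf k)\<bar>)"
    by (rule sum_mono) auto
  also have "\<dots> < e"
    using ac_small[OF p \<open>bad \<subseteq> p\<close>] bad_len \<open>d' \<le> d\<close> by linarith
  finally have bad_incr: "sum ?incr bad < e" .
  have "- (c * sum ?len bad) \<le> \<bar>c\<bar> * sum ?len bad"
    using bad_len(2) by (metis abs_ge_minus_self minus_mult_left mult_right_mono)
  also have "\<dots> \<le> \<bar>c\<bar> * d'"
    using bad_len(1) by (intro mult_left_mono) auto
  finally have bad_len_term: "- (c * sum ?len bad) \<le> e"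
    using \<open>\<bar>c\<bar> * d' \<le> e\<close> by linarith
  have "f b - f a = sum ?incr (p - bad) + sum ?incr bad"
    using additive_tagged_division_1[OF \<open>a \<le> b\<close> p, of f] sum.subset_diff[OF \<open>bad \<subseteq> p\<close> \<open>finite p\<close>, of ?incr]
    by simp
  also have "\<dots> \<le> c * sum ?len (p - bad) + e"
    using \<gamma>2[OF p] fine bad_incr unfolding good fine_Int by fastforce
  also have "sum ?len (p - bad) = (b - a) - sum ?len bad"
    using additive_tagged_division_1[OF \<open>a \<le> b\<close> p, of id] sum.subset_diff[OF \<open>bad \<subseteq> p\<close> \<open>finite p\<close>, of ?len]
    by (simp add: case_prod_beta)
  finally show ?thesis
    using bad_len_term by (simp add: right_diff_distrib)
qed

lemma abs_cont_increment_le: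
  fixes f :: "real \<Rightarrow> real"
  assumes "a \<le> b" and ac: "abs_cont_on S f" "{a..b} \<subseteq> S" and Z: "negligible Z"
    and slope: "\<And>t e. t \<in> {a..b} \<Longrightarrow> t \<notin> Z \<Longrightarrow> e > 0 \<Longrightarrow> slope_le_at f (c + e) t"
  shows "f b - f a \<le> c * (b - a)"
proof (rule field_le_epsilon)
  fix e :: real assume "e > 0"
  define e' where "e' = e / (b - a + 2)"
  have "e' > 0" and e_eq: "e' * (b - a + 2) = e"
    using \<open>e > 0\<close> \<open>a \<le> b\<close> by (simp_all add: e'_def)
  have "f b - f a \<le> (c + e') * (b - a) + 2 * e'"
    using abs_cont_increment_le_approx[OF \<open>a \<le> b\<close> ac Z \<open>e' > 0\<close>] slope \<open>e' > 0\<close> by blast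
  also have "\<dots> = c * (b - a) + e"
    using e_eq by (simp add: algebra_simps)
  finally show "f b - f a \<le> c * (b - a) + e" .
qed

section \<open>Times at which maximisers move differently\<close>

lemma countable_strict_local_minima:
  fixes h :: "real \<Rightarrow> real"
  shows "countable {t. eventually (\<lambda>s. h t < h s) (at t)}"
proof -
  define B where "B q = {t. fst q < t \<and> t < snd q \<and> (\<forall>s. s \<noteq> t \<and> fst q < s \<and> s < snd q \<longrightarrow> h t < h s)}"
    for q :: "real \<times> real"
  have "{t. eventually (\<lambda>s. h t < h s) (at t)} \<subseteq> (\<Union>q\<in>\<rat> \<times> \<rat>. B q)"
  proof
    fix t assume "t \<in> {t. eventually (\<lambda>s. h t < h s) (at t)}"
    then obtain r where "r > 0" and r: "\<And>s. s \<noteq> t \<Longrightarrow> dist s t < r \<Longrightarrow> h t < h s"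
      unfolding eventually_at by auto
    obtain q1 q2 where "q1 \<in> \<rat>" "t - r < q1" "q1 < t" and "q2 \<in> \<rat>" "t < q2" "q2 < t + r"
      using Rats_dense_in_real[of "t - r" t] Rats_dense_in_real[of t "t + r"] \<open>r > 0\<close> by auto
    then have "t \<in> B (q1, q2)"
      using r unfolding B_def by (auto simp: dist_real_def)
    with \<open>q1 \<in> \<rat>\<close> \<open>q2 \<in> \<rat>\<close> show "t \<in> (\<Union>q\<in>\<rat> \<times> \<rat>. B q)"
      by blast
  qed
  moreover have "countable (B q)" for q
  proof (cases "B q = {}")
    case False
    then obtain t where t: "t \<in> B q"
      by blast
    have "t' = t" if "t' \<in> B q" for t'
    proof (rule ccontr)
      assume "t' \<noteq> t"
      then have "h t' < h t" "h t < h t'"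
        using t that unfolding B_def by auto
      then show False
        by simp
    qed
    then have "B q \<subseteq> {t}"
      by blast
    then show ?thesis
      by (rule countable_subset) simp
  qed simp
  then have "countable (\<Union>q\<in>\<rat> \<times> \<rat>. B q)"
    by (intro countable_UN) (simp_all add: countable_rat)
  ultimately show ?thesis
    by (rule countable_subset)
qed

lemma Max_plus_linear_strict_local_min:
  fixes y :: "'i \<Rightarrow> real \<Rightarrow> real" and N :: "'i set"
  defines "M \<equiv> \<lambda>s. Max ((\<lambda>j. y j s) ` N)"
  assumes fin: "finite N" and "\<beta> > 0"
    and i: "i \<in> N" "y i t = M t" "(y i has_real_derivative ui) (at t)" "ui \<le> - \<beta>"
    and j: "j \<in> N" "y j t = M t" "(y j has_real_derivative uj) (at t)" "0 \<le> uj"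
  shows "eventually (\<lambda>s. M t + \<beta> / 2 * t < M s + \<beta> / 2 * s) (at t)"
proof -
  have le_M: "y k s \<le> M s" if "k \<in> N" for k s
    using fin that by (auto simp: M_def)
  have "slope_le_at (\<lambda>s. - y j s) (- uj + \<beta> / 4) t"
    using \<open>\<beta> > 0\<close> by (intro has_real_derivative_slope_le_at[OF DERIV_minus[OF j(3)]]) auto
  then have "eventually (\<lambda>s. - y j s \<le> - y j t + (- uj + \<beta> / 4) * (s - t)) (at_right t)"
    unfolding slope_le_at_def by simp
  then have right: "eventually (\<lambda>s. M t + \<beta> / 2 * t < M s + \<beta> / 2 * s) (at_right t)"
    using eventually_at_right_less[of t]
  proof eventually_elim
    case (elim s)
    have "0 \<le> uj * (s - t)" "0 < \<beta> * (s - t)"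
      using elim(2) j(4) \<open>\<beta> > 0\<close> by simp_all
    with elim(1) le_M[OF j(1), of s] j(2) show ?case
      by (simp add: field_simps)
  qed
  have "slope_le_at (y i) (ui + \<beta> / 4) t"
    using \<open>\<beta> > 0\<close> i(3) by (intro has_real_derivative_slope_le_at) auto
  then have "eventually (\<lambda>s. y i t + (ui + \<beta> / 4) * (s - t) \<le> y i s) (at_left t)"
    unfolding slope_le_at_def by simp
  moreover have "eventually (\<lambda>s. s < t) (at_left t)"
    by (simp add: eventually_at_filter)
  ultimately have left: "eventually (\<lambda>s. M t + \<beta> / 2 * t < M s + \<beta> / 2 * s) (at_left t)"
  proof eventually_elim
    case (elim s)
    have "(- \<beta>) * (s - t) \<le> ui * (s - t)" "0 < \<beta> * (t - s)"
      using mult_right_mono_neg[OF i(4), of "s - t"] elim(2) \<open>\<beta> > 0\<close> by simp_all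
    with elim(1) le_M[OF i(1), of s] i(2) show ?case
      by (simp add: field_simps)
  qed
  from left right show ?thesis
    by (simp add: eventually_at_split)
qed

definition max_conflict_times :: "('i \<Rightarrow> real \<Rightarrow> real) \<Rightarrow> 'i set \<Rightarrow> real \<Rightarrow> real set" where
  "max_conflict_times y N \<beta> = {t. \<exists>i\<in>N. \<exists>j\<in>N. \<exists>ui uj.
     y i t = Max ((\<lambda>j. y j t) ` N) \<and> y j t = Max ((\<lambda>j. y j t) ` N) \<and>
     (y i has_real_derivative ui) (at t) \<and> (y j has_real_derivative uj) (at t) \<and> ui \<le> - \<beta> \<and> 0 \<le> uj}"

lemma countable_max_conflict_times:
  assumes "finite N" and "\<beta> > 0"
  shows "countable (max_conflict_times y N \<beta>)"
proof (rule countable_subset[OF _ countable_strict_local_minima])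
  show "max_conflict_times y N \<beta> \<subseteq>
      {t. eventually (\<lambda>s. Max ((\<lambda>j. y j t) ` N) + \<beta> / 2 * t < Max ((\<lambda>j. y j s) ` N) + \<beta> / 2 * s) (at t)}"
  proof
    fix t assume "t \<in> max_conflict_times y N \<beta>"
    then obtain i j ui uj where "i \<in> N" "j \<in> N" "y i t = Max ((\<lambda>j. y j t) ` N)" "y j t = Max ((\<lambda>j. y j t) ` N)"
      "(y i has_real_derivative ui) (at t)" "(y j has_real_derivative uj) (at t)" "ui \<le> - \<beta>" "0 \<le> uj"
      unfolding max_conflict_times_def by blast
    then show "t \<in> {t. eventually (\<lambda>s. Max ((\<lambda>j. y j t) ` N) + \<beta> / 2 * t < Max ((\<lambda>j. y j s) ` N) + \<beta> / 2 * s) (at t)}"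
      using Max_plus_linear_strict_local_min[OF assms, of i y t ui j uj] by simp
  qed
qed

lemma not_in_max_conflict_times:
  assumes "t \<notin> max_conflict_times y N \<beta>" and "i \<in> N" "j \<in> N"
    and "y i t = Max ((\<lambda>j. y j t) ` N)" "y j t = Max ((\<lambda>j. y j t) ` N)"
    and "(y i has_real_derivative ui) (at t)" "(y j has_real_derivative uj) (at t)" "ui \<le> - \<beta>"
  shows "uj < 0"
proof (rule ccontr)
  assume "\<not> uj < 0"
  then have "0 \<le> uj"
    by simp
  with assms(2-8) have "t \<in> max_conflict_times y N \<beta>"
    unfolding max_conflict_times_def by blast
  with assms(1) show False
    by simp
qed

lemma countable_imp_negligible: "countable (S :: real set) \<Longrightarrow> negligible S"
  by (metis countable_imp_null_set_lborel negligible_iff_null_sets null_sets_completionI)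

section \<open>The trimming step of FTRC\<close>

lemma sorted_take_subset_less:
  fixes w :: "'a \<Rightarrow> 'b::linorder"
  assumes sorted: "sorted (map w L)" and k: "k \<le> card {j \<in> set L. w j < c}"
  shows "set (take k L) \<subseteq> {j. w j < c}"
proof
  fix d assume d: "d \<in> set (take k L)"
  show "d \<in> {j. w j < c}"
  proof (rule ccontr)
    assume "d \<notin> {j. w j < c}"
    then have "c \<le> w d"
      by simp
    have "sorted (map w (take k L) @ map w (drop k L))"
      using sorted by (metis append_take_drop_id map_append)
    then have w_le: "w d \<le> w j" if "j \<in> set (drop k L)" for j
      using d that by (auto simp: sorted_append)
    have "{j \<in> set L. w j < c} \<subseteq> set (take k L) - {d}"
    proof
      fix j assume j: "j \<in> {j \<in> set L. w j < c}"
      then have "w j < w d"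
        using \<open>c \<le> w d\<close> order_less_le_trans by auto
      then have "j \<notin> set (drop k L)" "j \<noteq> d"
        using w_le leD by blast+
      moreover have "set L = set (take k L) \<union> set (drop k L)"
        by (metis append_take_drop_id set_append)
      ultimately show "j \<in> set (take k L) - {d}"
        using j by blast
    qed
    then have "card {j \<in> set L. w j < c} \<le> card (set (take k L) - {d})"
      by (intro card_mono) auto
    also have "\<dots> < card (set (take k L))"
      using d by (intro card_Diff1_less) auto
    also have "\<dots> \<le> k"
      using card_length[of "take k L"] by simp
    finally show False
      using k by simp
  qed
qed

lemma removal_of_smallest:
  fixes w :: "'a \<Rightarrow> 'b::linorder" and c :: 'b and F :: nat
  assumes sorted: "sorted (map w L)" and "distinct L"
  defines "G \<equiv> {j \<in> set L. w j < c}"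
  defines "R \<equiv> if card G < F then G else set (take F L)"
  shows "R \<subseteq> G" and "card R \<le> F" and "card G \<le> F \<Longrightarrow> R = G"
proof -
  have card_take: "card (set (take F L)) = min F (length L)"
    using \<open>distinct L\<close> by (simp add: distinct_card)
  show "R \<subseteq> G"
    using sorted_take_subset_less[OF sorted, of F c] set_take_subset[of F L]
    by (auto simp: R_def G_def)
  show "card R \<le> F"
    using card_take by (simp add: R_def)
  show "R = G" if "card G \<le> F"
  proof (cases "card G < F")
    case False
    have "card G \<le> length L"
      using \<open>distinct L\<close> card_mono[of "set L" G] by (auto simp: G_def distinct_card)
    then have "card R = card G"
      using False that card_take by (simp add: R_def)
    then show ?thesis
      using \<open>R \<subseteq> G\<close> by (simp add: G_def card_subset_eq)
  qed (simp add: R_def)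
qed

lemma removal_of_largest:
  fixes w :: "'a \<Rightarrow> 'b::linordered_ab_group_add" and c :: 'b and F :: nat
  assumes "sorted (map w L)" and "distinct L"
  defines "G \<equiv> {j \<in> set L. c < w j}"
  defines "R \<equiv> if card G < F then G else set (drop (length L - F) L)"
  shows "R \<subseteq> G" and "card R \<le> F" and "card G \<le> F \<Longrightarrow> R = G"
proof -
  have "sorted (map (\<lambda>j. - w j) (rev L))" "distinct (rev L)"
    using assms(1,2) by (simp_all add: sorted_map sorted_wrt_rev)
  note smallest = removal_of_smallest[OF this, of "- c" F]
  have G_eq: "{j \<in> set (rev L). - w j < - c} = G"
    by (auto simp: G_def)
  have R_eq: "(if card G < F then G else set (take F (rev L))) = R"
    by (simp add: R_def take_rev)
  show "R \<subseteq> G" "card R \<le> F" "card G \<le> F \<Longrightarrow> R = G"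
    using smallest unfolding G_eq R_eq by simp_all
qed

lemma ftrc_removed_bounds:
  fixes w :: "nat \<Rightarrow> real"
  assumes "finite (in_nbrs E i)"
  defines "larger \<equiv> {j \<in> in_nbrs E i. w i < w j}" and "smaller \<equiv> {j \<in> in_nbrs E i. w j < w i}"
  shows "card larger \<le> F \<Longrightarrow> larger \<subseteq> ftrc_removed E F w i"
    and "card smaller \<le> F \<Longrightarrow> smaller \<subseteq> ftrc_removed E F w i"
    and "card (ftrc_removed E F w i \<inter> larger) \<le> F"
    and "card (ftrc_removed E F w i \<inter> smaller) \<le> F"
proof -
  define L where "L = sort_key w (sorted_list_of_set (in_nbrs E i))"
  have L: "sorted (map w L)" "distinct L" "set L = in_nbrs E i"
    using assms(1) by (simp_all add: L_def)
  define R_large where "R_large = (if card larger < F then larger else set (drop (length L - F) L))"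
  define R_small where "R_small = (if card smaller < F then smaller else set (take F L))"
  have removed: "ftrc_removed E F w i = R_large \<union> R_small"
    by (simp add: ftrc_removed_def Let_def R_large_def R_small_def L_def larger_def smaller_def)
  note large = removal_of_largest[OF L(1,2), of "w i" F, unfolded L(3), folded larger_def R_large_def]
  note small = removal_of_smallest[OF L(1,2), of "w i" F, unfolded L(3), folded smaller_def R_small_def]
  have "finite R_large" "finite R_small"
    using finite_subset[OF large(1)] finite_subset[OF small(1)] assms(1) by (simp_all add: larger_def smaller_def)
  have "ftrc_removed E F w i \<inter> larger \<subseteq> R_large" "ftrc_removed E F w i \<inter> smaller \<subseteq> R_small"
    using large(1) small(1) by (auto simp: removed larger_def smaller_def)
  then show "card (ftrc_removed E F w i \<inter> larger) \<le> F" "card (ftrc_removed E F w i \<inter> smaller) \<le> F"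
    using large(2) small(2) card_mono[OF \<open>finite R_large\<close>] card_mono[OF \<open>finite R_small\<close>]
    by (meson order_trans)+
  show "card larger \<le> F \<Longrightarrow> larger \<subseteq> ftrc_removed E F w i"
    using large(3) by (simp add: removed)
  show "card smaller \<le> F \<Longrightarrow> smaller \<subseteq> ftrc_removed E F w i"
    using small(3) by (simp add: removed)
qed

lemma ftrc_input_nonpos:
  fixes w :: "nat \<Rightarrow> real"
  assumes "finite (in_nbrs E i)" and "\<alpha> \<ge> 0" and "card {j \<in> in_nbrs E i. w i < w j} \<le> F"
  shows "ftrc_input E F \<alpha> w i \<le> 0"
proof -
  have "w j - w i \<le> 0" if "j \<in> insert i (in_nbrs E i) - ftrc_removed E F w i" for j
    using that ftrc_removed_bounds(1)[OF assms(1,3)] by (cases "w j \<le> w i") auto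
  then have "(\<Sum>j\<in>insert i (in_nbrs E i) - ftrc_removed E F w i. w j - w i) \<le> 0"
    by (rule sum_nonpos)
  then show ?thesis
    using assms(2) by (auto simp: ftrc_input_def sgn_if)
qed

lemma ftrc_input_nonneg:
  fixes w :: "nat \<Rightarrow> real"
  assumes "finite (in_nbrs E i)" and "\<alpha> \<ge> 0" and "card {j \<in> in_nbrs E i. w j < w i} \<le> F"
  shows "ftrc_input E F \<alpha> w i \<ge> 0"
proof -
  have "w j - w i \<ge> 0" if "j \<in> insert i (in_nbrs E i) - ftrc_removed E F w i" for j
    using that ftrc_removed_bounds(2)[OF assms(1,3)] by (cases "w i \<le> w j") auto
  then have "(\<Sum>j\<in>insert i (in_nbrs E i) - ftrc_removed E F w i. w j - w i) \<ge> 0"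
    by (rule sum_nonneg)
  then show ?thesis
    using assms(2) by (auto simp: ftrc_input_def sgn_if)
qed

lemma ftrc_input_eq_neg:
  fixes w :: "nat \<Rightarrow> real"
  assumes fin: "finite (in_nbrs E i)" and larger: "card {j \<in> in_nbrs E i. w i < w j} \<le> F"
    and P: "P \<subseteq> {j \<in> in_nbrs E i. w j < w i}" "F < card P"
  shows "ftrc_input E F \<alpha> w i = - \<alpha>"
proof -
  let ?kept = "insert i (in_nbrs E i) - ftrc_removed E F w i"
  have le: "w j - w i \<le> 0" if "j \<in> ?kept" for j
    using that ftrc_removed_bounds(1)[OF fin larger] by (cases "w j \<le> w i") auto
  have "card (P \<inter> ftrc_removed E F w i) \<le> card (ftrc_removed E F w i \<inter> {j \<in> in_nbrs E i. w j < w i})"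
    using P(1) fin by (intro card_mono) auto
  also have "\<dots> \<le> F"
    by (rule ftrc_removed_bounds(4)[OF fin])
  finally have "card (P \<inter> ftrc_removed E F w i) < card P"
    using P(2) by linarith
  then have "\<not> P \<subseteq> ftrc_removed E F w i"
    by (auto simp: Int_absorb2)
  then obtain p where "p \<in> ?kept" "w p - w i < 0"
    using P(1) by auto
  then have "(\<Sum>j\<in>?kept. w j - w i) < (\<Sum>j\<in>?kept. 0)"
    using fin le by (intro sum_strict_mono_ex1) auto
  then show ?thesis
    by (simp add: ftrc_input_def)
qed

lemma ftrc_input_eq_pos:
  fixes w :: "nat \<Rightarrow> real"
  assumes fin: "finite (in_nbrs E i)" and smaller: "card {j \<in> in_nbrs E i. w j < w i} \<le> F"
    and P: "P \<subseteq> {j \<in> in_nbrs E i. w i < w j}" "F < card P"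
  shows "ftrc_input E F \<alpha> w i = \<alpha>"
proof -
  let ?kept = "insert i (in_nbrs E i) - ftrc_removed E F w i"
  have ge: "0 \<le> w j - w i" if "j \<in> ?kept" for j
    using that ftrc_removed_bounds(2)[OF fin smaller] by (cases "w i \<le> w j") auto
  have "card (P \<inter> ftrc_removed E F w i) \<le> card (ftrc_removed E F w i \<inter> {j \<in> in_nbrs E i. w i < w j})"
    using P(1) fin by (intro card_mono) auto
  also have "\<dots> \<le> F"
    by (rule ftrc_removed_bounds(3)[OF fin])
  finally have "card (P \<inter> ftrc_removed E F w i) < card P"
    using P(2) by linarith
  then have "\<not> P \<subseteq> ftrc_removed E F w i"
    by (auto simp: Int_absorb2)
  then obtain p where "p \<in> ?kept" "0 < w p - w i"
    using P(1) by auto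
  then have "(\<Sum>j\<in>?kept. 0) < (\<Sum>j\<in>?kept. w j - w i)"
    using fin ge by (intro sum_strict_mono_ex1) auto
  then show ?thesis
    by (simp add: ftrc_input_def)
qed

section \<open>A trajectory of the normal agents\<close>

locale ftrc_run =
  fixes n F :: nat and \<alpha> :: real and E :: "(nat \<times> nat) set"
    and N A :: "nat set" and g :: "real \<Rightarrow> real"
    and xA :: "nat \<Rightarrow> nat \<Rightarrow> real \<Rightarrow> real" and x :: "nat \<Rightarrow> real \<Rightarrow> real"
  assumes edges: "E \<subseteq> {1..n} \<times> {1..n}"
    and agents: "N \<union> A = {1..n}" "N \<inter> A = {}"
    and alpha_pos: "\<alpha> > 0"
    and g_strict_mono: "strict_mono g"
    and misbehaving_local: "F_local {1..n} E A F"
    and trajectory: "ftrc_trajectory {1..n} E F \<alpha> N g xA x"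
    and normal_nonempty: "N \<noteq> {}"
begin

definition input :: "nat \<Rightarrow> real \<Rightarrow> real" where
  "input j t = ftrc_input E F \<alpha> (received N g x xA t j) j"

definition state_max :: "real \<Rightarrow> real" where
  "state_max t = Max ((\<lambda>j. x j t) ` N)"

definition state_min :: "real \<Rightarrow> real" where
  "state_min t = Min ((\<lambda>j. x j t) ` N)"

lemma finite_normal: "finite N"
  using agents(1) by (metis finite_Un finite_atLeastAtMost)

lemma finite_in_nbrs: "finite (in_nbrs E k)"
proof (rule finite_subset)
  show "in_nbrs E k \<subseteq> {1..n}"
    using edges by (auto simp: in_nbrs_def)
qed simp

lemma in_nbrs_normal_or_misbehaving: "in_nbrs E k \<subseteq> N \<union> A"
  using edges agents(1) by (auto simp: in_nbrs_def)

lemma card_misbehaving_in_nbrs: "k \<in> N \<Longrightarrow> card (in_nbrs E k \<inter> A) \<le> F"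
  using misbehaving_local agents unfolding F_local_def by auto

lemma abs_cont_state: "k \<in> N \<Longrightarrow> 0 \<le> b \<Longrightarrow> abs_cont_on {0..b} (x k)"
  using trajectory unfolding ftrc_trajectory_def loc_abs_cont_nonneg_def by blast

lemma state_derivative_ae:
  obtains Z where "negligible Z"
    "\<And>t j. 0 \<le> t \<Longrightarrow> t \<notin> Z \<Longrightarrow> j \<in> N \<Longrightarrow> (x j has_real_derivative input j t) (at t)"
proof -
  obtain Z where "Z \<in> null_sets lebesgue"
    "\<forall>t\<in>{0..} - Z. \<forall>j\<in>N. (x j has_real_derivative input j t) (at t)"
    using trajectory unfolding ftrc_trajectory_def input_def by blast
  then show thesis
    using that[of Z] by (simp add: negligible_iff_null_sets)
qed

lemma input_cases: "input j t \<in> {- \<alpha>, 0, \<alpha>}"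
  by (simp add: input_def ftrc_input_def sgn_if)

lemma x_le_state_max: "j \<in> N \<Longrightarrow> x j t \<le> state_max t"
  using finite_normal by (simp add: state_max_def)

lemma state_min_le_x: "j \<in> N \<Longrightarrow> state_min t \<le> x j t"
  using finite_normal by (simp add: state_min_def)

lemma state_min_eq_minus_Max: "state_min t = - Max ((\<lambda>j. - x j t) ` N)"
  using minus_Min_eq_Max[of "(\<lambda>j. x j t) ` N"] finite_normal normal_nonempty
  by (simp add: state_min_def image_image)

lemma card_larger_received_at_max:
  assumes "k \<in> N" and "x k t = state_max t"
  defines "w \<equiv> received N g x xA t k"
  shows "card {j \<in> in_nbrs E k. w k < w j} \<le> F"
proof -
  have "{j \<in> in_nbrs E k. w k < w j} \<subseteq> in_nbrs E k \<inter> A"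
  proof safe
    fix j assume j: "j \<in> in_nbrs E k" "w k < w j"
    show "j \<in> A"
    proof (rule ccontr)
      assume "j \<notin> A"
      then have "j \<in> N"
        using j(1) in_nbrs_normal_or_misbehaving by blast
      then have "x k t < x j t"
        using j(2) assms g_strict_mono by (simp add: w_def received_def strict_mono_less)
      then show False
        using x_le_state_max[OF \<open>j \<in> N\<close>, of t] assms(2) by simp
    qed
  qed
  then have "card {j \<in> in_nbrs E k. w k < w j} \<le> card (in_nbrs E k \<inter> A)"
    using finite_in_nbrs by (intro card_mono) auto
  also have "\<dots> \<le> F"
    using card_misbehaving_in_nbrs[OF assms(1)] .
  finally show ?thesis .
qed

lemma card_smaller_received_at_min:
  assumes "k \<in> N" and "x k t = state_min t"
  defines "w \<equiv> received N g x xA t k"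
  shows "card {j \<in> in_nbrs E k. w j < w k} \<le> F"
proof -
  have "{j \<in> in_nbrs E k. w j < w k} \<subseteq> in_nbrs E k \<inter> A"
  proof safe
    fix j assume j: "j \<in> in_nbrs E k" "w j < w k"
    show "j \<in> A"
    proof (rule ccontr)
      assume "j \<notin> A"
      then have "j \<in> N"
        using j(1) in_nbrs_normal_or_misbehaving by blast
      then have "x j t < x k t"
        using j(2) assms g_strict_mono by (simp add: w_def received_def strict_mono_less)
      then show False
        using state_min_le_x[OF \<open>j \<in> N\<close>, of t] assms(2) by simp
    qed
  qed
  then have "card {j \<in> in_nbrs E k. w j < w k} \<le> card (in_nbrs E k \<inter> A)"
    using finite_in_nbrs by (intro card_mono) auto
  also have "\<dots> \<le> F"
    using card_misbehaving_in_nbrs[OF assms(1)] .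
  finally show ?thesis .
qed

lemma card_normal_in_nbrs_outside:
  assumes "k \<in> N" and "2 * F + 1 \<le> card (in_nbrs E k - S)"
  shows "F < card ((in_nbrs E k - S) \<inter> N)"
proof -
  have "in_nbrs E k - S \<subseteq> ((in_nbrs E k - S) \<inter> N) \<union> (in_nbrs E k \<inter> A)"
    using in_nbrs_normal_or_misbehaving by blast
  then have "card (in_nbrs E k - S) \<le> card (((in_nbrs E k - S) \<inter> N) \<union> (in_nbrs E k \<inter> A))"
    using finite_in_nbrs by (intro card_mono) auto
  also have "\<dots> \<le> card ((in_nbrs E k - S) \<inter> N) + card (in_nbrs E k \<inter> A)"
    by (rule card_Un_le)
  finally show ?thesis
    using assms card_misbehaving_in_nbrs[OF assms(1)] by linarith
qed

lemma input_at_max: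
  assumes "k \<in> N" and "x k t = state_max t"
  shows "input k t \<le> 0"
  unfolding input_def
  using alpha_pos by (intro ftrc_input_nonpos[OF finite_in_nbrs _ card_larger_received_at_max[OF assms]]) simp

lemma input_at_min:
  assumes "k \<in> N" and "x k t = state_min t"
  shows "0 \<le> input k t"
  unfolding input_def
  using alpha_pos by (intro ftrc_input_nonneg[OF finite_in_nbrs _ card_smaller_received_at_min[OF assms]]) simp

lemma input_at_reaching_max:
  assumes "k \<in> N" and "x k t = state_max t"
    and "2 * F + 1 \<le> card (in_nbrs E k - {j \<in> N. x j t = state_max t})"
  shows "input k t = - \<alpha>"
  unfolding input_def
proof (rule ftrc_input_eq_neg[OF finite_in_nbrs card_larger_received_at_max[OF assms(1,2)]])
  let ?P = "(in_nbrs E k - {j \<in> N. x j t = state_max t}) \<inter> N"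
  show "F < card ?P"
    by (rule card_normal_in_nbrs_outside[OF assms(1,3)])
  show "?P \<subseteq> {j \<in> in_nbrs E k. received N g x xA t k j < received N g x xA t k k}"
  proof
    fix j assume j: "j \<in> ?P"
    then have "x j t < x k t"
      using x_le_state_max[of j t] assms(2) by (auto simp: order_less_le)
    then show "j \<in> {j \<in> in_nbrs E k. received N g x xA t k j < received N g x xA t k k}"
      using j assms(1) g_strict_mono by (simp add: received_def strict_mono_less)
  qed
qed

lemma input_at_reaching_min:
  assumes "k \<in> N" and "x k t = state_min t"
    and "2 * F + 1 \<le> card (in_nbrs E k - {j \<in> N. x j t = state_min t})"
  shows "input k t = \<alpha>"
  unfolding input_def
proof (rule ftrc_input_eq_pos[OF finite_in_nbrs card_smaller_received_at_min[OF assms(1,2)]])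
  let ?P = "(in_nbrs E k - {j \<in> N. x j t = state_min t}) \<inter> N"
  show "F < card ?P"
    by (rule card_normal_in_nbrs_outside[OF assms(1,3)])
  show "?P \<subseteq> {j \<in> in_nbrs E k. received N g x xA t k k < received N g x xA t k j}"
  proof
    fix j assume j: "j \<in> ?P"
    then have "x k t < x j t"
      using state_min_le_x[of j t] assms(2) by (auto simp: order_less_le)
    then show "j \<in> {j \<in> in_nbrs E k. received N g x xA t k k < received N g x xA t k j}"
      using j assms(1) g_strict_mono by (simp add: received_def strict_mono_less)
  qed
qed

lemma abs_cont_state_extremes:
  assumes "0 \<le> b"
  shows "abs_cont_on {0..b} state_max" and "abs_cont_on {0..b} (\<lambda>t. - state_min t)"
    and "abs_cont_on {0..b} (\<lambda>t. state_max t - state_min t)"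
proof -
  have ac: "\<And>j. j \<in> N \<Longrightarrow> abs_cont_on {0..b} (x j)"
    using abs_cont_state assms by blast
  have max_bound: "\<bar>state_max v - state_max u\<bar> \<le> 1 * (\<Sum>j\<in>N. \<bar>x j v - x j u\<bar>)" for u v
    using abs_Max_diff_le_sum[OF finite_normal normal_nonempty, of "\<lambda>j. x j v" "\<lambda>j. x j u"]
    by (simp add: state_max_def)
  have min_bound: "\<bar>- state_min v - - state_min u\<bar> \<le> 1 * (\<Sum>j\<in>N. \<bar>x j v - x j u\<bar>)" for u v
    using abs_Max_diff_le_sum[OF finite_normal normal_nonempty, of "\<lambda>j. - x j v" "\<lambda>j. - x j u"]
    by (simp add: state_min_eq_minus_Max abs_minus_commute)
  have spread_bound: "\<bar>(state_max v - state_min v) - (state_max u - state_min u)\<bar> \<le> 2 * (\<Sum>j\<in>N. \<bar>x j v - x j u\<bar>)"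
    for u v
    using max_bound[of v u] min_bound[of v u]
      abs_triangle_ineq4[of "state_max v - state_max u" "- state_min v - - state_min u"]
    by (simp add: algebra_simps)
  show "abs_cont_on {0..b} state_max"
    by (rule abs_cont_on_dominated[OF finite_normal ac zero_le_one max_bound])
  show "abs_cont_on {0..b} (\<lambda>t. - state_min t)"
    by (rule abs_cont_on_dominated[OF finite_normal ac zero_le_one min_bound])
  show "abs_cont_on {0..b} (\<lambda>t. state_max t - state_min t)"
    by (rule abs_cont_on_dominated[OF finite_normal ac _ spread_bound]) simp_all
qed

lemma slope_state_max:
  assumes "\<And>j. j \<in> N \<Longrightarrow> (x j has_real_derivative input j t) (at t)"
    and "\<And>j. j \<in> N \<Longrightarrow> x j t = state_max t \<Longrightarrow> input j t < c"
  shows "slope_le_at state_max c t"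
proof -
  have "state_max = (\<lambda>s. Max ((\<lambda>j. x j s) ` N))"
    by (simp add: fun_eq_iff state_max_def)
  then show ?thesis
    using slope_le_at_Max[OF finite_normal normal_nonempty assms(1) assms(2)[unfolded state_max_def]]
    by simp
qed

lemma slope_minus_state_min:
  assumes deriv: "\<And>j. j \<in> N \<Longrightarrow> (x j has_real_derivative input j t) (at t)"
    and bottom: "\<And>j. j \<in> N \<Longrightarrow> x j t = state_min t \<Longrightarrow> - input j t < c"
  shows "slope_le_at (\<lambda>s. - state_min s) c t"
proof -
  have "(\<lambda>s. - state_min s) = (\<lambda>s. Max ((\<lambda>j. - x j s) ` N))"
    by (simp add: fun_eq_iff state_min_eq_minus_Max)
  moreover have "slope_le_at (\<lambda>s. Max ((\<lambda>j. - x j s) ` N)) c t"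
  proof (rule slope_le_at_Max[OF finite_normal normal_nonempty])
    show "((\<lambda>s. - x j s) has_real_derivative - input j t) (at t)" if "j \<in> N" for j
      using deriv[OF that] by (rule DERIV_minus)
    show "- input j t < c" if "j \<in> N" "- x j t = Max ((\<lambda>j. - x j t) ` N)" for j
      using bottom that by (simp add: state_min_eq_minus_Max)
  qed
  ultimately show ?thesis
    by simp
qed

lemma state_max_antimono:
  assumes "0 \<le> a" and "a \<le> b"
  shows "state_max b \<le> state_max a"
proof -
  obtain Z where "negligible Z" and deriv:
    "\<And>t j. 0 \<le> t \<Longrightarrow> t \<notin> Z \<Longrightarrow> j \<in> N \<Longrightarrow> (x j has_real_derivative input j t) (at t)"
    using state_derivative_ae by blast
  have "state_max b - state_max a \<le> 0 * (b - a)"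
  proof (rule abs_cont_increment_le[OF \<open>a \<le> b\<close> abs_cont_state_extremes(1) _ \<open>negligible Z\<close>])
    show "0 \<le> b" "{a..b} \<subseteq> {0..b}"
      using assms by auto
    fix t e :: real assume "t \<in> {a..b}" "t \<notin> Z" "e > 0"
    then have "0 \<le> t"
      using assms by simp
    show "slope_le_at state_max (0 + e) t"
    proof (rule slope_state_max)
      show "(x j has_real_derivative input j t) (at t)" if "j \<in> N" for j
        using deriv[OF \<open>0 \<le> t\<close> \<open>t \<notin> Z\<close> that] .
      show "input j t < 0 + e" if "j \<in> N" "x j t = state_max t" for j
        using input_at_max[OF that] \<open>e > 0\<close> by simp
    qed
  qed
  then show ?thesis
    by simp
qed

lemma state_min_mono:
  assumes "0 \<le> a" and "a \<le> b"
  shows "state_min a \<le> state_min b"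
proof -
  obtain Z where "negligible Z" and deriv:
    "\<And>t j. 0 \<le> t \<Longrightarrow> t \<notin> Z \<Longrightarrow> j \<in> N \<Longrightarrow> (x j has_real_derivative input j t) (at t)"
    using state_derivative_ae by blast
  have "- state_min b - - state_min a \<le> 0 * (b - a)"
  proof (rule abs_cont_increment_le[OF \<open>a \<le> b\<close> abs_cont_state_extremes(2) _ \<open>negligible Z\<close>])
    show "0 \<le> b" "{a..b} \<subseteq> {0..b}"
      using assms by auto
    fix t e :: real assume "t \<in> {a..b}" "t \<notin> Z" "e > 0"
    then have "0 \<le> t"
      using assms by simp
    show "slope_le_at (\<lambda>s. - state_min s) (0 + e) t"
    proof (rule slope_minus_state_min)
      show "(x j has_real_derivative input j t) (at t)" if "j \<in> N" for j
        using deriv[OF \<open>0 \<le> t\<close> \<open>t \<notin> Z\<close> that] .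
      show "- input j t < 0 + e" if "j \<in> N" "x j t = state_min t" for j
        using input_at_min[OF that] \<open>e > 0\<close> by simp
    qed
  qed
  then show ?thesis
    by simp
qed

lemma slope_spread_if_max_falls:
  assumes deriv: "\<And>j. j \<in> N \<Longrightarrow> (x j has_real_derivative input j t) (at t)"
    and falls: "\<And>j. j \<in> N \<Longrightarrow> x j t = state_max t \<Longrightarrow> input j t = - \<alpha>" and "e > 0"
  shows "slope_le_at (\<lambda>s. state_max s - state_min s) (e - \<alpha>) t"
proof -
  have "slope_le_at state_max (e / 2 - \<alpha>) t"
    using deriv falls \<open>e > 0\<close> by (intro slope_state_max) auto
  moreover have "slope_le_at (\<lambda>s. - state_min s) (e / 2) t"
    using deriv input_at_min \<open>e > 0\<close> by (intro slope_minus_state_min) force+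
  ultimately show ?thesis
    using slope_le_at_add by fastforce
qed

lemma slope_spread_if_min_rises:
  assumes deriv: "\<And>j. j \<in> N \<Longrightarrow> (x j has_real_derivative input j t) (at t)"
    and rises: "\<And>j. j \<in> N \<Longrightarrow> x j t = state_min t \<Longrightarrow> input j t = \<alpha>" and "e > 0"
  shows "slope_le_at (\<lambda>s. state_max s - state_min s) (e - \<alpha>) t"
proof -
  have "slope_le_at state_max (e / 2) t"
    using deriv input_at_max \<open>e > 0\<close> by (intro slope_state_max) force+
  moreover have "slope_le_at (\<lambda>s. - state_min s) (e / 2 - \<alpha>) t"
    using deriv rises \<open>e > 0\<close> by (intro slope_minus_state_min) auto
  ultimately show ?thesis
    using slope_le_at_add by fastforce
qed

lemma slope_spread:
  assumes robust: "r_robust {1..n} E (2 * F + 1)"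
    and deriv: "\<And>j. j \<in> N \<Longrightarrow> (x j has_real_derivative input j t) (at t)"
    and max_alike: "\<And>i j. i \<in> N \<Longrightarrow> j \<in> N \<Longrightarrow> x i t = state_max t \<Longrightarrow> x j t = state_max t \<Longrightarrow>
      input i t = - \<alpha> \<Longrightarrow> input j t < 0"
    and min_alike: "\<And>i j. i \<in> N \<Longrightarrow> j \<in> N \<Longrightarrow> x i t = state_min t \<Longrightarrow> x j t = state_min t \<Longrightarrow>
      input i t = \<alpha> \<Longrightarrow> 0 < input j t"
    and "state_min t < state_max t" and "e > 0"
  shows "slope_le_at (\<lambda>s. state_max s - state_min s) (e - \<alpha>) t"
proof -
  define S_max where "S_max = {j \<in> N. x j t = state_max t}"
  define S_min where "S_min = {j \<in> N. x j t = state_min t}"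
  have "state_max t \<in> (\<lambda>j. x j t) ` N" "state_min t \<in> (\<lambda>j. x j t) ` N"
    using finite_normal normal_nonempty by (simp_all add: state_max_def state_min_def)
  then have "S_max \<noteq> {}" "S_min \<noteq> {}"
    by (auto simp: S_max_def S_min_def)
  moreover have "S_max \<inter> S_min = {}" "S_max \<subseteq> {1..n}" "S_min \<subseteq> {1..n}"
    using \<open>state_min t < state_max t\<close> agents(1) by (auto simp: S_max_def S_min_def)
  ultimately have "r_reachable E S_max (2 * F + 1) \<or> r_reachable E S_min (2 * F + 1)"
    using robust unfolding r_robust_def by blast
  then show ?thesis
  proof
    assume "r_reachable E S_max (2 * F + 1)"
    then obtain k where "k \<in> N" "x k t = state_max t" "2 * F + 1 \<le> card (in_nbrs E k - S_max)"
      unfolding r_reachable_def S_max_def by auto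
    then have "input k t = - \<alpha>"
      using input_at_reaching_max by (simp add: S_max_def)
    then have falls: "input j t = - \<alpha>" if "j \<in> N" "x j t = state_max t" for j
      using max_alike[OF \<open>k \<in> N\<close> that(1) \<open>x k t = state_max t\<close> that(2)] input_cases[of j t] alpha_pos
      by auto
    show ?thesis
      using slope_spread_if_max_falls[OF deriv falls \<open>e > 0\<close>] .
  next
    assume "r_reachable E S_min (2 * F + 1)"
    then obtain k where "k \<in> N" "x k t = state_min t" "2 * F + 1 \<le> card (in_nbrs E k - S_min)"
      unfolding r_reachable_def S_min_def by auto
    then have "input k t = \<alpha>"
      using input_at_reaching_min by (simp add: S_min_def)
    then have rises: "input j t = \<alpha>" if "j \<in> N" "x j t = state_min t" for j
      using min_alike[OF \<open>k \<in> N\<close> that(1) \<open>x k t = state_min t\<close> that(2)] input_cases[of j t] alpha_pos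
      by auto
    show ?thesis
      using slope_spread_if_min_rises[OF deriv rises \<open>e > 0\<close>] .
  qed
qed

lemma regular_times_ae:
  obtains Z where "negligible Z"
    "\<And>t j. 0 \<le> t \<Longrightarrow> t \<notin> Z \<Longrightarrow> j \<in> N \<Longrightarrow> (x j has_real_derivative input j t) (at t)"
    "\<And>t i j. 0 \<le> t \<Longrightarrow> t \<notin> Z \<Longrightarrow> i \<in> N \<Longrightarrow> j \<in> N \<Longrightarrow> x i t = state_max t \<Longrightarrow> x j t = state_max t \<Longrightarrow>
      input i t = - \<alpha> \<Longrightarrow> input j t < 0"
    "\<And>t i j. 0 \<le> t \<Longrightarrow> t \<notin> Z \<Longrightarrow> i \<in> N \<Longrightarrow> j \<in> N \<Longrightarrow> x i t = state_min t \<Longrightarrow> x j t = state_min t \<Longrightarrow>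
      input i t = \<alpha> \<Longrightarrow> 0 < input j t"
proof -
  obtain Z where "negligible Z" and deriv:
    "\<And>t j. 0 \<le> t \<Longrightarrow> t \<notin> Z \<Longrightarrow> j \<in> N \<Longrightarrow> (x j has_real_derivative input j t) (at t)"
    using state_derivative_ae by blast
  let ?B_max = "max_conflict_times x N \<alpha>" and ?B_min = "max_conflict_times (\<lambda>j s. - x j s) N \<alpha>"
  have "negligible (Z \<union> ?B_max \<union> ?B_min)"
    using \<open>negligible Z\<close> countable_max_conflict_times[OF finite_normal alpha_pos] countable_imp_negligible
    by auto
  then show thesis
  proof (rule that)
    fix t j assume "0 \<le> t" "t \<notin> Z \<union> ?B_max \<union> ?B_min" "j \<in> N"
    then show "(x j has_real_derivative input j t) (at t)"
      using deriv by blast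
  next
    fix t i j assume t: "0 \<le> t" "t \<notin> Z \<union> ?B_max \<union> ?B_min"
      and ij: "i \<in> N" "j \<in> N" "x i t = state_max t" "x j t = state_max t" "input i t = - \<alpha>"
    show "input j t < 0"
      using not_in_max_conflict_times[of t x N \<alpha> i j "input i t" "input j t"] t ij
        deriv[OF t(1) _ ij(1)] deriv[OF t(1) _ ij(2)]
      by (simp add: state_max_def)
  next
    fix t i j assume t: "0 \<le> t" "t \<notin> Z \<union> ?B_max \<union> ?B_min"
      and ij: "i \<in> N" "j \<in> N" "x i t = state_min t" "x j t = state_min t" "input i t = \<alpha>"
    show "0 < input j t"
      using not_in_max_conflict_times[of t "\<lambda>j s. - x j s" N \<alpha> i j "- input i t" "- input j t"] t ij
        DERIV_minus[OF deriv[OF t(1) _ ij(1)]] DERIV_minus[OF deriv[OF t(1) _ ij(2)]]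
      by (simp add: state_min_eq_minus_Max)
  qed
qed

lemma spread_decrease:
  assumes robust: "r_robust {1..n} E (2 * F + 1)"
    and "0 \<le> t" and "state_min t < state_max t"
  shows "state_max t - state_min t \<le> state_max 0 - state_min 0 - \<alpha> * t"
proof -
  obtain Z where "negligible Z"
    and deriv: "\<And>s j. 0 \<le> s \<Longrightarrow> s \<notin> Z \<Longrightarrow> j \<in> N \<Longrightarrow> (x j has_real_derivative input j s) (at s)"
    and max_alike: "\<And>s i j. 0 \<le> s \<Longrightarrow> s \<notin> Z \<Longrightarrow> i \<in> N \<Longrightarrow> j \<in> N \<Longrightarrow> x i s = state_max s \<Longrightarrow>
      x j s = state_max s \<Longrightarrow> input i s = - \<alpha> \<Longrightarrow> input j s < 0"
    and min_alike: "\<And>s i j. 0 \<le> s \<Longrightarrow> s \<notin> Z \<Longrightarrow> i \<in> N \<Longrightarrow> j \<in> N \<Longrightarrow> x i s = state_min s \<Longrightarrow>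
      x j s = state_min s \<Longrightarrow> input i s = \<alpha> \<Longrightarrow> 0 < input j s"
    by (rule regular_times_ae) (rule that)
  have "(state_max t - state_min t) - (state_max 0 - state_min 0) \<le> - \<alpha> * (t - 0)"
  proof (rule abs_cont_increment_le[OF \<open>0 \<le> t\<close> abs_cont_state_extremes(3)[OF \<open>0 \<le> t\<close>] order_refl \<open>negligible Z\<close>])
    fix s e :: real assume s: "s \<in> {0..t}" "s \<notin> Z" and "e > 0"
    then have "0 \<le> s"
      by simp
    have "state_max t \<le> state_max s" "state_min s \<le> state_min t"
      using state_max_antimono[OF \<open>0 \<le> s\<close>] state_min_mono[OF \<open>0 \<le> s\<close>] s by auto
    then have "state_min s < state_max s"
      using \<open>state_min t < state_max t\<close> by linarith
    have "slope_le_at (\<lambda>s. state_max s - state_min s) (e - \<alpha>) s"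
    proof (rule slope_spread[OF robust _ _ _ \<open>state_min s < state_max s\<close> \<open>e > 0\<close>])
    qed (use deriv max_alike min_alike \<open>0 \<le> s\<close> s(2) in blast)+
    then show "slope_le_at (\<lambda>s. state_max s - state_min s) (- \<alpha> + e) s"
      by simp
  qed
  then show ?thesis
    by simp
qed

lemma state_within_initial_range:
  assumes "0 \<le> t" and "i \<in> N"
  shows "state_min 0 \<le> x i t" and "x i t \<le> state_max 0"
  using state_min_mono[OF order_refl assms(1)] state_max_antimono[OF order_refl assms(1)]
    state_min_le_x[OF assms(2), of t] x_le_state_max[OF assms(2), of t]
  by linarith+

lemma consensus_after_spread_time:
  assumes robust: "r_robust {1..n} E (2 * F + 1)"
    and "0 \<le> t" and "(state_max 0 - state_min 0) / \<alpha> \<le> t" and "i \<in> N" and "j \<in> N"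
  shows "x i t = x j t"
proof -
  have "\<not> state_min t < state_max t"
  proof
    assume "state_min t < state_max t"
    moreover have "state_max 0 - state_min 0 \<le> \<alpha> * t"
      using assms(3) alpha_pos by (simp add: field_simps)
    ultimately show False
      using spread_decrease[OF robust \<open>0 \<le> t\<close>] by linarith
  qed
  then show ?thesis
    using state_min_le_x[of _ t] x_le_state_max[of _ t] assms(4,5) by (meson antisym not_less order_trans)
qed

end

theorem theorem5:
  fixes n F :: nat and \<alpha> :: real and E :: "(nat \<times> nat) set"
    and N A :: "nat set" and g :: "real \<Rightarrow> real"
    and xA :: "nat \<Rightarrow> nat \<Rightarrow> real \<Rightarrow> real"
  assumes n2: "n \<ge> 2"
    and E: "E \<subseteq> {1..n} \<times> {1..n}"
    and part: "N \<union> A = {1..n}" "N \<inter> A = {}"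
    and alpha: "\<alpha> > 0"
    and g: "strict_mono g"
    and meas: "\<forall>k\<in>A. \<forall>i\<in>N. (\<lambda>t. g (xA k i t)) \<in> borel_measurable lebesgue"
    and local: "F_local {1..n} E A F"
    and robust: "r_robust {1..n} E (2 * F + 1)"
  shows "\<exists>T :: (nat \<Rightarrow> real) \<Rightarrow> real. (\<forall>y. T y \<ge> 0) \<and>
     (\<forall>x. ftrc_trajectory {1..n} E F \<alpha> N g xA x \<longrightarrow>
        (\<forall>t\<ge>0. \<forall>i\<in>N. Min ((\<lambda>j. x j 0) ` N) \<le> x i t \<and> x i t \<le> Max ((\<lambda>j. x j 0) ` N)) \<and>
        (\<forall>t\<ge>T (restrict (\<lambda>j. x j 0) N). \<forall>i\<in>N. \<forall>j\<in>N. x i t = x j t))"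
proof -
  define T where "T y = max 0 ((Max (y ` N) - Min (y ` N)) / \<alpha>)" for y :: "nat \<Rightarrow> real"
  have "(\<forall>t\<ge>0. \<forall>i\<in>N. Min ((\<lambda>j. x j 0) ` N) \<le> x i t \<and> x i t \<le> Max ((\<lambda>j. x j 0) ` N)) \<and>
      (\<forall>t\<ge>T (restrict (\<lambda>j. x j 0) N). \<forall>i\<in>N. \<forall>j\<in>N. x i t = x j t)"
    if "ftrc_trajectory {1..n} E F \<alpha> N g xA x" for x
  proof (cases "N = {}")
    case False
    then interpret ftrc_run n F \<alpha> E N A g xA x
      using E part alpha g local that by unfold_locales
    have T_eq: "T (restrict (\<lambda>j. x j 0) N) = max 0 ((state_max 0 - state_min 0) / \<alpha>)"
      unfolding T_def state_max_def state_min_def by (metis image_restrict_eq)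
    show ?thesis
    proof (intro conjI allI impI ballI)
      fix t :: real and i assume "0 \<le> t" "i \<in> N"
      then show "Min ((\<lambda>j. x j 0) ` N) \<le> x i t" "x i t \<le> Max ((\<lambda>j. x j 0) ` N)"
        using state_within_initial_range by (simp_all add: state_min_def state_max_def)
    next
      fix t :: real and i j assume "T (restrict (\<lambda>j. x j 0) N) \<le> t" "i \<in> N" "j \<in> N"
      moreover from this(1) have "0 \<le> t" "(state_max 0 - state_min 0) / \<alpha> \<le> t"
        unfolding T_eq by simp_all
      ultimately show "x i t = x j t"
        using consensus_after_spread_time[OF robust] by blast
    qed
  qed simp
  then show ?thesis
    by (intro exI[of _ T]) (auto simp: T_def)
qed

end
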